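(* Let $C\in\mathcal{M}^{or}_{(r,s)}(\Delta,F)$ be an old broccoli curve, and for $x\in\{3,4,6\}$ let $n_{(x)}$ be the number of vertices of $C$ of type $(x)$. Let $e_f$ be the number of even fixed ends of $C$ and $e_n$ the number of even non-fixed ends of $C$. Then $$n_{(3)}+n_{(4)}+e_n=n_{(6)}+e_f.$$ Consequently the broccoli index satisfies $i_B(C)=0$.
   Context: Curves. Let $r,s\ge 0$. An $(r,s)$-marked curve of degree $\Delta$ is a tuple $C=(\Gamma,h,x_1,\dots,x_{r+s})$ where $\Gamma$ is a metric graph (unbounded edges allowed) each of whose connected components is a tree, and $h:\Gamma\to\mathbb{R}^2$ is continuous, affine on each edge with integral direction vector, and satisfies the balancing condition at each vertex. The $x_1,\dots,x_{r+s}$ are distinct unbounded edges contracted by $h$ (markings; $x_1,\dots,x_r$ real, $x_{r+1},\dots,x_{r+s}$ complex); the other unbounded edges $y_1,\dots,y_n$ (ends, labeled) are not contracted, with outward direction vectors forming $\Delta=(v(y_1),\dots,v(y_n))$. The weight $w(e)$ of a non-contracted edge is the gcd of the coordinates of its direction vector; $e$ is even/odd according to $w(e)$. For a vertex with exactly three adjacent non-contracted edges with direction vectors $u,v,w$, its Mikhalkin multiplicity is $a=|\det(u,v)|$. An oriented curve carries an orientation of every non-contracted edge; $F=\{i:y_i\text{ oriented inwards}\}$ is its set of fixed ends, and $\mathcal{M}^{or}_{(r,s)}(\Delta,F)$ is the set of connected such curves. Old broccoli curves (in the sense of Gathmann–Markwig–Schroeter). An oriented curve is an old broccoli curve if every vertex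 is of one of the types: (1) adjacent to a real marking, with two odd non-contracted edges, both outgoing; (2) unmarked, 3-valent, three odd edges, two incoming, one outgoing; (3) unmarked, 3-valent, with two incoming edges one even and one odd, and one odd outgoing edge; (4) unmarked, 3-valent, three even edges, two incoming, one outgoing; (5) adjacent to a complex marking, with three odd non-contracted edges, all outgoing; (6) adjacent to a complex marking, with one even and two odd non-contracted edges, all outgoing. Broccoli index. For an oriented curve $C$ all of whose vertices are 3-valent unmarked, or adjacent to a real marking and two non-contracted edges, or adjacent to a complex marking and three non-contracted edges: let $V_{cm}$ be the set of vertices adjacent to a complex marking with even Mikhalkin multiplicity, $V_{wcm}$ the set of vertices adjacent to no marking with even Mikhalkin multiplicity, $e_f$ the number of fixed ends of even weight, $e_n$ the number of non-fixed ends of even weight. Then $i_B(C)=-\#V_{cm}-e_f+\#V_{wcm}+e_n$. *)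

theory Defs
  imports Complex_Main
begin

text \<open>Combinatorial model of an (r,s)-marked tropical curve of degree Delta with an
orientation.  Each bounded edge e
goes from src e to tgt e, has length len e > 0 and integral direction vector edir e
(from src to tgt), possibly zero (contracted bounded edge).  The ends are labelled
0..<length Delta; end i is attached at vertex endv i and has outward direction
Delta ! i (non-zero).  Marking j (j < r + s) is attached at vertex markv j; markings
j < r are real, r <= j < r + s are complex.\<close>

record ('v, 'e) curve =
  verts :: "'v set"
  edges :: "'e set"
  src   :: "'e \<Rightarrow> 'v"
  tgt   :: "'e \<Rightarrow> 'v"
  len   :: "'e \<Rightarrow> real"
  pos   :: "'v \<Rightarrow> real \<times> real"
  edir  :: "'e \<Rightarrow> int \<times> int"
  endv  :: "nat \<Rightarrow> 'v"
  markv :: "nat \<Rightarrow> 'v"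

datatype 'e flag = FSrc 'e | FTgt 'e | FEnd nat

definition adj_rel :: "('v,'e) curve \<Rightarrow> ('v \<times> 'v) set" where
  "adj_rel C = {(src C e, tgt C e) | e. e \<in> edges C} \<union> {(tgt C e, src C e) | e. e \<in> edges C}"

definition flags_at :: "('v,'e) curve \<Rightarrow> (int \<times> int) list \<Rightarrow> 'v \<Rightarrow> 'e flag set" where
  "flags_at C \<Delta> v = {FSrc e | e. e \<in> edges C \<and> src C e = v}
     \<union> {FTgt e | e. e \<in> edges C \<and> tgt C e = v}
     \<union> {FEnd i | i. i < length \<Delta> \<and> endv C i = v}"

text \<open>outward direction vector of a flag (seen from its vertex)\<close>
fun fdir :: "('v,'e) curve \<Rightarrow> (int \<times> int) list \<Rightarrow> 'e flag \<Rightarrow> int \<times> int" where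
  "fdir C \<Delta> (FSrc e) = edir C e"
| "fdir C \<Delta> (FTgt e) = (- fst (edir C e), - snd (edir C e))"
| "fdir C \<Delta> (FEnd i) = \<Delta> ! i"

definition is_curve :: "nat \<Rightarrow> nat \<Rightarrow> (int \<times> int) list \<Rightarrow> ('v,'e) curve \<Rightarrow> bool" where
  "is_curve r s \<Delta> C \<longleftrightarrow>
     finite (verts C) \<and> finite (edges C) \<and>
     (\<forall>e\<in>edges C. src C e \<in> verts C \<and> tgt C e \<in> verts C \<and> len C e > 0 \<and>
        fst (pos C (tgt C e)) = fst (pos C (src C e)) + len C e * real_of_int (fst (edir C e)) \<and>
        snd (pos C (tgt C e)) = snd (pos C (src C e)) + len C e * real_of_int (snd (edir C e))) \<and>
     (\<forall>i<length \<Delta>. endv C i \<in> verts C \<and> \<Delta> ! i \<noteq> (0,0)) \<and>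
     (\<forall>j<r+s. markv C j \<in> verts C) \<and>
     (\<forall>v\<in>verts C. (\<Sum>f\<in>flags_at C \<Delta> v. fst (fdir C \<Delta> f)) = 0 \<and>
                    (\<Sum>f\<in>flags_at C \<Delta> v. snd (fdir C \<Delta> f)) = 0)"

definition is_connected_tree :: "('v,'e) curve \<Rightarrow> bool" where
  "is_connected_tree C \<longleftrightarrow> verts C \<noteq> {} \<and>
     (\<forall>u\<in>verts C. \<forall>w\<in>verts C. (u, w) \<in> (adj_rel C)\<^sup>*) \<and>
     card (edges C) + 1 = card (verts C)"

text \<open>Orientation ori: bounded non-contracted edge e is oriented from src to tgt iff ori e.
Ends in F are fixed (oriented inwards), others oriented outwards.\<close>
definition in_Mor :: "nat \<Rightarrow> nat \<Rightarrow> (int \<times> int) list \<Rightarrow> nat set \<Rightarrow> ('v,'e) curve \<Rightarrow> ('e \<Rightarrow> bool) \<Rightarrow> bool" where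
  "in_Mor r s \<Delta> F C ori \<longleftrightarrow> is_curve r s \<Delta> C \<and> is_connected_tree C \<and> F \<subseteq> {..<length \<Delta>}"

fun outgoing :: "('e \<Rightarrow> bool) \<Rightarrow> nat set \<Rightarrow> 'e flag \<Rightarrow> bool" where
  "outgoing ori F (FSrc e) = ori e"
| "outgoing ori F (FTgt e) = (\<not> ori e)"
| "outgoing ori F (FEnd i) = (i \<notin> F)"

definition vweight :: "int \<times> int \<Rightarrow> int" where
  "vweight d = gcd (fst d) (snd d)"

definition fweight :: "('v,'e) curve \<Rightarrow> (int \<times> int) list \<Rightarrow> 'e flag \<Rightarrow> int" where
  "fweight C \<Delta> f = vweight (fdir C \<Delta> f)"

definition nc_flags :: "('v,'e) curve \<Rightarrow> (int \<times> int) list \<Rightarrow> 'v \<Rightarrow> 'e flag set" where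
  "nc_flags C \<Delta> v = {f \<in> flags_at C \<Delta> v. fdir C \<Delta> f \<noteq> (0,0)}"

definition marks_at :: "nat \<Rightarrow> nat \<Rightarrow> ('v,'e) curve \<Rightarrow> 'v \<Rightarrow> nat set" where
  "marks_at r s C v = {j. j < r + s \<and> markv C j = v}"

definition valence :: "nat \<Rightarrow> nat \<Rightarrow> (int \<times> int) list \<Rightarrow> ('v,'e) curve \<Rightarrow> 'v \<Rightarrow> nat" where
  "valence r s \<Delta> C v = card (flags_at C \<Delta> v) + card (marks_at r s C v)"

definition has_real_mark :: "nat \<Rightarrow> nat \<Rightarrow> ('v,'e) curve \<Rightarrow> 'v \<Rightarrow> bool" where
  "has_real_mark r s C v \<longleftrightarrow> (\<exists>j\<in>marks_at r s C v. j < r)"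

definition has_complex_mark :: "nat \<Rightarrow> nat \<Rightarrow> ('v,'e) curve \<Rightarrow> 'v \<Rightarrow> bool" where
  "has_complex_mark r s C v \<longleftrightarrow> (\<exists>j\<in>marks_at r s C v. r \<le> j)"

definition unmarked3 :: "nat \<Rightarrow> nat \<Rightarrow> (int \<times> int) list \<Rightarrow> ('v,'e) curve \<Rightarrow> 'v \<Rightarrow> bool" where
  "unmarked3 r s \<Delta> C v \<longleftrightarrow> marks_at r s C v = {} \<and> valence r s \<Delta> C v = 3 \<and> card (nc_flags C \<Delta> v) = 3"

abbreviation "fodd C \<Delta> f \<equiv> odd (fweight C \<Delta> f)"
abbreviation "feven C \<Delta> f \<equiv> even (fweight C \<Delta> f)"

definition vtype :: "nat \<Rightarrow> nat \<Rightarrow> (int \<times> int) list \<Rightarrow> nat set \<Rightarrow> ('v,'e) curve \<Rightarrow> ('e \<Rightarrow> bool) \<Rightarrow> nat \<Rightarrow> 'v \<Rightarrow> bool" where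
  "vtype r s \<Delta> F C ori k v \<longleftrightarrow> (let N = nc_flags C \<Delta> v; I = {f\<in>N. \<not> outgoing ori F f}; Ou = {f\<in>N. outgoing ori F f} in
     (k = 1 \<and> has_real_mark r s C v \<and> card N = 2 \<and> (\<forall>f\<in>N. fodd C \<Delta> f \<and> outgoing ori F f))
   \<or> (k = 2 \<and> unmarked3 r s \<Delta> C v \<and> (\<forall>f\<in>N. fodd C \<Delta> f) \<and> card I = 2 \<and> card Ou = 1)
   \<or> (k = 3 \<and> unmarked3 r s \<Delta> C v \<and> card I = 2 \<and> card Ou = 1 \<and>
        (\<exists>f\<in>I. \<exists>g\<in>I. feven C \<Delta> f \<and> fodd C \<Delta> g) \<and> (\<forall>f\<in>Ou. fodd C \<Delta> f))
   \<or> (k = 4 \<and> unmarked3 r s \<Delta> C v \<and> (\<forall>f\<in>N. feven C \<Delta> f) \<and> card I = 2 \<and> card Ou = 1)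
   \<or> (k = 5 \<and> has_complex_mark r s C v \<and> card N = 3 \<and> (\<forall>f\<in>N. fodd C \<Delta> f \<and> outgoing ori F f))
   \<or> (k = 6 \<and> has_complex_mark r s C v \<and> card N = 3 \<and> (\<forall>f\<in>N. outgoing ori F f) \<and>
        card {f\<in>N. feven C \<Delta> f} = 1 \<and> card {f\<in>N. fodd C \<Delta> f} = 2))"

definition old_broccoli :: "nat \<Rightarrow> nat \<Rightarrow> (int \<times> int) list \<Rightarrow> nat set \<Rightarrow> ('v,'e) curve \<Rightarrow> ('e \<Rightarrow> bool) \<Rightarrow> bool" where
  "old_broccoli r s \<Delta> F C ori \<longleftrightarrow> in_Mor r s \<Delta> F C ori \<and>
     (\<forall>v\<in>verts C. \<exists>k\<in>{1..6}. vtype r s \<Delta> F C ori k v)"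

definition n_type :: "nat \<Rightarrow> nat \<Rightarrow> (int \<times> int) list \<Rightarrow> nat set \<Rightarrow> ('v,'e) curve \<Rightarrow> ('e \<Rightarrow> bool) \<Rightarrow> nat \<Rightarrow> nat" where
  "n_type r s \<Delta> F C ori k = card {v\<in>verts C. vtype r s \<Delta> F C ori k v}"

definition e_fixed :: "(int \<times> int) list \<Rightarrow> nat set \<Rightarrow> nat" where
  "e_fixed \<Delta> F = card {i. i < length \<Delta> \<and> i \<in> F \<and> even (vweight (\<Delta> ! i))}"

definition e_nonfixed :: "(int \<times> int) list \<Rightarrow> nat set \<Rightarrow> nat" where
  "e_nonfixed \<Delta> F = card {i. i < length \<Delta> \<and> i \<notin> F \<and> even (vweight (\<Delta> ! i))}"

definition det2 :: "int \<times> int \<Rightarrow> int \<times> int \<Rightarrow> int" where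
  "det2 u w = fst u * snd w - snd u * fst w"

text \<open>Mikhalkin multiplicity of a vertex with exactly three non-contracted adjacent edges
(well defined by balancing)\<close>
definition mikh_mult :: "('v,'e) curve \<Rightarrow> (int \<times> int) list \<Rightarrow> 'v \<Rightarrow> int" where
  "mikh_mult C \<Delta> v = (SOME m. \<exists>f\<in>nc_flags C \<Delta> v. \<exists>g\<in>nc_flags C \<Delta> v. f \<noteq> g \<and>
       m = \<bar>det2 (fdir C \<Delta> f) (fdir C \<Delta> g)\<bar>)"

definition V_cm :: "nat \<Rightarrow> nat \<Rightarrow> (int \<times> int) list \<Rightarrow> ('v,'e) curve \<Rightarrow> 'v set" where
  "V_cm r s \<Delta> C = {v\<in>verts C. has_complex_mark r s C v \<and> card (nc_flags C \<Delta> v) = 3 \<and>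
                      even (mikh_mult C \<Delta> v)}"

definition V_wcm :: "nat \<Rightarrow> nat \<Rightarrow> (int \<times> int) list \<Rightarrow> ('v,'e) curve \<Rightarrow> 'v set" where
  "V_wcm r s \<Delta> C = {v\<in>verts C. unmarked3 r s \<Delta> C v \<and> even (mikh_mult C \<Delta> v)}"

definition broccoli_index :: "nat \<Rightarrow> nat \<Rightarrow> (int \<times> int) list \<Rightarrow> nat set \<Rightarrow> ('v,'e) curve \<Rightarrow> int" where
  "broccoli_index r s \<Delta> F C =
     - int (card (V_cm r s \<Delta> C)) - int (e_fixed \<Delta> F) + int (card (V_wcm r s \<Delta> C)) + int (e_nonfixed \<Delta> F)"

end

theory Submission
  imports Defs
begin

text \<open>Give every non-contracted flag of even weight the charge \<open>+1\<close> if its edge points into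
the vertex and \<open>-1\<close> if it points out.  The two flags of a bounded edge carry opposite
orientations and equal weight, so they cancel, and the total charge is \<open>e_f - e_n\<close>.
Counted per vertex, a vertex of type (3), (4), (6) has charge \<open>1\<close>, \<open>2 - 1\<close>, \<open>-1\<close>, and all
other types have only odd edges.  For the index: by balancing, the determinant of two of
the three edge vectors at a vertex is even iff one of the three vectors is even, so
\<open>V_cm\<close> consists of the type (6) vertices and \<open>V_wcm\<close> of the type (3) and (4) vertices.\<close>

fun flag_vertex :: "('v, 'e) curve \<Rightarrow> 'e flag \<Rightarrow> 'v" where
  "flag_vertex C (FSrc e) = src C e"
| "flag_vertex C (FTgt e) = tgt C e"
| "flag_vertex C (FEnd i) = endv C i"

definition all_flags :: "('v, 'e) curve \<Rightarrow> (int \<times> int) list \<Rightarrow> 'e flag set" where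
  "all_flags C \<Delta> = FSrc ` edges C \<union> FTgt ` edges C \<union> FEnd ` {..<length \<Delta>}"

lemma flags_at_eq: "flags_at C \<Delta> v = {f \<in> all_flags C \<Delta>. flag_vertex C f = v}"
  unfolding flags_at_def all_flags_def by auto

lemma finite_all_flags: "is_curve r s \<Delta> C \<Longrightarrow> finite (all_flags C \<Delta>)"
  unfolding is_curve_def all_flags_def by auto

lemma finite_flags_at:
  assumes "is_curve r s \<Delta> C"
  shows "finite (flags_at C \<Delta> v)"
  using finite_all_flags[OF assms] unfolding flags_at_eq by simp

lemma sum_over_vertices_flags_at:
  assumes "is_curve r s \<Delta> C"
  shows "(\<Sum>v\<in>verts C. \<Sum>f\<in>flags_at C \<Delta> v. \<phi> f) = (\<Sum>f\<in>all_flags C \<Delta>. \<phi> f)"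
proof -
  have "finite (verts C)" "flag_vertex C ` all_flags C \<Delta> \<subseteq> verts C"
    using assms unfolding is_curve_def all_flags_def by auto
  then show ?thesis
    unfolding flags_at_eq by (rule sum.group[OF finite_all_flags[OF assms]])
qed

lemma even_vweight_iff: "even (vweight d) \<longleftrightarrow> even (fst d) \<and> even (snd d)"
  unfolding vweight_def by simp

lemma even_det2_iff:
  assumes "fst u + fst v + fst w = 0" "snd u + snd v + snd w = 0"
  shows "even (det2 u v) \<longleftrightarrow> even (vweight u) \<or> even (vweight v) \<or> even (vweight w)"
proof -
  obtain a b c d where uv: "u = (a, b)" "v = (c, d)" by fastforce
  have w: "w = (- a - c, - b - d)" using assms uv by (cases w) auto
  show ?thesis
    unfolding uv w det2_def even_vweight_iff
    by (cases "even a"; cases "even b"; cases "even c"; cases "even d"; simp)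
qed

lemma card_3_remaining_elem:
  assumes "card N = 3" "f \<in> N" "g \<in> N" "f \<noteq> g"
  obtains h where "N = {f, g, h}" "h \<noteq> f" "h \<noteq> g"
  using assms by (auto simp: card_3_iff)

lemma nc_flags_balanced:
  assumes "is_curve r s \<Delta> C" "v \<in> verts C"
  shows "(\<Sum>f\<in>nc_flags C \<Delta> v. fst (fdir C \<Delta> f)) = 0"
    and "(\<Sum>f\<in>nc_flags C \<Delta> v. snd (fdir C \<Delta> f)) = 0"
proof -
  have fin: "finite (flags_at C \<Delta> v)" using finite_flags_at[OF assms(1)] .
  have sub: "nc_flags C \<Delta> v \<subseteq> flags_at C \<Delta> v"
    and zero: "\<forall>f\<in>flags_at C \<Delta> v - nc_flags C \<Delta> v. fdir C \<Delta> f = (0, 0)"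
    unfolding nc_flags_def by auto
  have restrict: "(\<Sum>f\<in>nc_flags C \<Delta> v. \<phi> (fdir C \<Delta> f)) = (\<Sum>f\<in>flags_at C \<Delta> v. \<phi> (fdir C \<Delta> f))"
    if "\<phi> (0, 0) = 0" for \<phi> :: "int \<times> int \<Rightarrow> int"
    by (rule sum.mono_neutral_left[OF fin sub]) (use zero that in auto)
  show "(\<Sum>f\<in>nc_flags C \<Delta> v. fst (fdir C \<Delta> f)) = 0"
    using restrict[of fst] assms unfolding is_curve_def by auto
  show "(\<Sum>f\<in>nc_flags C \<Delta> v. snd (fdir C \<Delta> f)) = 0"
    using restrict[of snd] assms unfolding is_curve_def by auto
qed

lemma even_mikh_mult_iff:
  assumes "is_curve r s \<Delta> C" "v \<in> verts C" "card (nc_flags C \<Delta> v) = 3"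
  shows "even (mikh_mult C \<Delta> v) \<longleftrightarrow> (\<exists>f\<in>nc_flags C \<Delta> v. feven C \<Delta> f)"
proof -
  let ?N = "nc_flags C \<Delta> v" and ?d = "fdir C \<Delta>"
  have "\<exists>m. \<exists>f\<in>?N. \<exists>g\<in>?N. f \<noteq> g \<and> m = \<bar>det2 (?d f) (?d g)\<bar>"
    using assms(3) by (auto simp: card_3_iff)
  from someI_ex[OF this] obtain f g where fg: "f \<in> ?N" "g \<in> ?N" "f \<noteq> g"
    and mikh: "mikh_mult C \<Delta> v = \<bar>det2 (?d f) (?d g)\<bar>"
    unfolding mikh_mult_def by blast
  obtain h where N: "?N = {f, g, h}" "h \<noteq> f" "h \<noteq> g"
    using card_3_remaining_elem[OF assms(3) fg] .
  have "fst (?d f) + fst (?d g) + fst (?d h) = 0" "snd (?d f) + snd (?d g) + snd (?d h) = 0"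
    using nc_flags_balanced[OF assms(1,2)] N fg(3) by (simp_all add: add.assoc)
  from even_det2_iff[OF this] show ?thesis
    unfolding mikh fweight_def N by auto
qed

definition even_charge :: "('v, 'e) curve \<Rightarrow> (int \<times> int) list \<Rightarrow> nat set \<Rightarrow> ('e \<Rightarrow> bool) \<Rightarrow> 'e flag \<Rightarrow> int" where
  "even_charge C \<Delta> F ori f =
     (if fdir C \<Delta> f \<noteq> (0, 0) \<and> feven C \<Delta> f then if outgoing ori F f then -1 else 1 else 0)"

lemma even_charge_FTgt: "even_charge C \<Delta> F ori (FTgt e) = - even_charge C \<Delta> F ori (FSrc e)"
  unfolding even_charge_def fweight_def vweight_def by (cases "edir C e") auto

lemma sum_even_charge_all_flags:
  assumes "is_curve r s \<Delta> C"
  shows "(\<Sum>f\<in>all_flags C \<Delta>. even_charge C \<Delta> F ori f) = int (e_fixed \<Delta> F) - int (e_nonfixed \<Delta> F)"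
proof -
  let ?q = "even_charge C \<Delta> F ori"
  have fin: "finite (edges C)" and ends: "\<forall>i<length \<Delta>. \<Delta> ! i \<noteq> (0, 0)"
    using assms unfolding is_curve_def by auto
  have "(\<Sum>f\<in>all_flags C \<Delta>. ?q f)
      = (\<Sum>f\<in>FSrc ` edges C. ?q f) + (\<Sum>f\<in>FTgt ` edges C. ?q f) + (\<Sum>f\<in>FEnd ` {..<length \<Delta>}. ?q f)"
    unfolding all_flags_def using fin by (subst sum.union_disjoint; auto)+
  also have "(\<Sum>f\<in>FSrc ` edges C. ?q f) + (\<Sum>f\<in>FTgt ` edges C. ?q f) = 0"
    by (simp add: sum.reindex inj_on_def even_charge_FTgt sum_negf)
  also have "(\<Sum>f\<in>FEnd ` {..<length \<Delta>}. ?q f)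
      = (\<Sum>i<length \<Delta>. of_bool (i \<in> F \<and> even (vweight (\<Delta> ! i))) - of_bool (i \<notin> F \<and> even (vweight (\<Delta> ! i))))"
    by (auto simp: sum.reindex inj_on_def even_charge_def fweight_def ends intro!: sum.cong)
  also have "\<dots> = int (e_fixed \<Delta> F) - int (e_nonfixed \<Delta> F)"
    unfolding sum_subtractf e_fixed_def e_nonfixed_def by (simp add: Int_def)
  finally show ?thesis by simp
qed

definition even_in_flags :: "(int \<times> int) list \<Rightarrow> nat set \<Rightarrow> ('v, 'e) curve \<Rightarrow> ('e \<Rightarrow> bool) \<Rightarrow> 'v \<Rightarrow> 'e flag set" where
  "even_in_flags \<Delta> F C ori v = {f \<in> nc_flags C \<Delta> v. feven C \<Delta> f \<and> \<not> outgoing ori F f}"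

definition even_out_flags :: "(int \<times> int) list \<Rightarrow> nat set \<Rightarrow> ('v, 'e) curve \<Rightarrow> ('e \<Rightarrow> bool) \<Rightarrow> 'v \<Rightarrow> 'e flag set" where
  "even_out_flags \<Delta> F C ori v = {f \<in> nc_flags C \<Delta> v. feven C \<Delta> f \<and> outgoing ori F f}"

lemma sum_even_charge_flags_at:
  assumes "finite (flags_at C \<Delta> v)"
  shows "(\<Sum>f\<in>flags_at C \<Delta> v. even_charge C \<Delta> F ori f)
           = int (card (even_in_flags \<Delta> F C ori v)) - int (card (even_out_flags \<Delta> F C ori v))"
proof -
  have "(\<Sum>f\<in>flags_at C \<Delta> v. even_charge C \<Delta> F ori f)
      = (\<Sum>f\<in>flags_at C \<Delta> v. of_bool (f \<in> even_in_flags \<Delta> F C ori v) - of_bool (f \<in> even_out_flags \<Delta> F C ori v))"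
    unfolding even_charge_def even_in_flags_def even_out_flags_def nc_flags_def
    by (rule sum.cong) auto
  also have "\<dots> = int (card (even_in_flags \<Delta> F C ori v)) - int (card (even_out_flags \<Delta> F C ori v))"
    using assms unfolding sum_subtractf even_in_flags_def even_out_flags_def nc_flags_def
    by (simp add: Int_def)
  finally show ?thesis .
qed

lemma vtype_3_even_flags:
  assumes "vtype r s \<Delta> F C ori 3 v"
  shows "card (even_in_flags \<Delta> F C ori v) = 1" "even_out_flags \<Delta> F C ori v = {}"
proof -
  let ?I = "{f \<in> nc_flags C \<Delta> v. \<not> outgoing ori F f}"
  have I: "card ?I = 2" and out_odd: "\<forall>f\<in>nc_flags C \<Delta> v. outgoing ori F f \<longrightarrow> fodd C \<Delta> f"
    and "\<exists>f\<in>?I. \<exists>g\<in>?I. feven C \<Delta> f \<and> fodd C \<Delta> g"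
    using assms unfolding vtype_def Let_def by auto
  then obtain f g where fg: "f \<in> ?I" "g \<in> ?I" "feven C \<Delta> f" "fodd C \<Delta> g" by blast
  have "finite ?I" using I by (intro card_ge_0_finite) simp
  moreover have "{f, g} \<subseteq> ?I" "card {f, g} = card ?I" using fg I by (auto simp: card_insert_if)
  ultimately have "?I = {f, g}" by (metis card_subset_eq)
  then have "even_in_flags \<Delta> F C ori v = {f}" using fg unfolding even_in_flags_def by auto
  then show "card (even_in_flags \<Delta> F C ori v) = 1" by simp
  show "even_out_flags \<Delta> F C ori v = {}" using out_odd unfolding even_out_flags_def by auto
qed

lemma vtype_4_even_flags:
  assumes "vtype r s \<Delta> F C ori 4 v"
  shows "card (even_in_flags \<Delta> F C ori v) = 2" "card (even_out_flags \<Delta> F C ori v) = 1"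
proof -
  have "\<forall>f\<in>nc_flags C \<Delta> v. feven C \<Delta> f"
    and "card {f \<in> nc_flags C \<Delta> v. \<not> outgoing ori F f} = 2" "card {f \<in> nc_flags C \<Delta> v. outgoing ori F f} = 1"
    using assms unfolding vtype_def Let_def by auto
  moreover have "even_in_flags \<Delta> F C ori v = {f \<in> nc_flags C \<Delta> v. \<not> outgoing ori F f}"
    "even_out_flags \<Delta> F C ori v = {f \<in> nc_flags C \<Delta> v. outgoing ori F f}"
    using calculation(1) unfolding even_in_flags_def even_out_flags_def by auto
  ultimately show "card (even_in_flags \<Delta> F C ori v) = 2" "card (even_out_flags \<Delta> F C ori v) = 1"
    by simp_all
qed

lemma vtype_6_even_flags:
  assumes "vtype r s \<Delta> F C ori 6 v"
  shows "even_in_flags \<Delta> F C ori v = {}" "card (even_out_flags \<Delta> F C ori v) = 1"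
proof -
  have "\<forall>f\<in>nc_flags C \<Delta> v. outgoing ori F f" "card {f \<in> nc_flags C \<Delta> v. feven C \<Delta> f} = 1"
    using assms unfolding vtype_def Let_def by auto
  moreover have "even_out_flags \<Delta> F C ori v = {f \<in> nc_flags C \<Delta> v. feven C \<Delta> f}"
    using calculation(1) unfolding even_out_flags_def by auto
  ultimately show "even_in_flags \<Delta> F C ori v = {}" "card (even_out_flags \<Delta> F C ori v) = 1"
    unfolding even_in_flags_def by auto
qed

lemma vtype_3_4_unmarked:
  "vtype r s \<Delta> F C ori 3 v \<or> vtype r s \<Delta> F C ori 4 v \<Longrightarrow> unmarked3 r s \<Delta> C v"
  unfolding vtype_def Let_def by auto

lemma vtype_6_marked:
  "vtype r s \<Delta> F C ori 6 v \<Longrightarrow> has_complex_mark r s C v \<and> card (nc_flags C \<Delta> v) = 3"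
  unfolding vtype_def Let_def by auto

lemma unmarked3_no_complex_mark: "unmarked3 r s \<Delta> C v \<Longrightarrow> \<not> has_complex_mark r s C v"
  unfolding unmarked3_def has_complex_mark_def by auto

lemma vtype_6_not_3_4:
  assumes "vtype r s \<Delta> F C ori 6 v"
  shows "\<not> vtype r s \<Delta> F C ori 3 v \<and> \<not> vtype r s \<Delta> F C ori 4 v"
  using vtype_6_marked[OF assms] unmarked3_no_complex_mark vtype_3_4_unmarked by metis

lemma vtype_3_not_4:
  assumes "vtype r s \<Delta> F C ori 3 v"
  shows "\<not> vtype r s \<Delta> F C ori 4 v"
proof -
  have "\<exists>g\<in>nc_flags C \<Delta> v. fodd C \<Delta> g"
    using assms unfolding vtype_def Let_def by auto
  then show ?thesis unfolding vtype_def Let_def by auto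
qed

lemma ex_even_flag_iff_vtype:
  assumes "k \<in> {1..6}" "vtype r s \<Delta> F C ori k v"
  shows "(\<exists>f\<in>nc_flags C \<Delta> v. feven C \<Delta> f)
           \<longleftrightarrow> vtype r s \<Delta> F C ori 3 v \<or> vtype r s \<Delta> F C ori 4 v \<or> vtype r s \<Delta> F C ori 6 v"
proof
  assume "\<exists>f\<in>nc_flags C \<Delta> v. feven C \<Delta> f"
  moreover have "k \<in> {1, 2, 5} \<Longrightarrow> \<forall>f\<in>nc_flags C \<Delta> v. fodd C \<Delta> f"
    using assms(2) unfolding vtype_def Let_def by auto
  ultimately have "k \<in> {3, 4, 6}" using assms(1) by fastforce
  then show "vtype r s \<Delta> F C ori 3 v \<or> vtype r s \<Delta> F C ori 4 v \<or> vtype r s \<Delta> F C ori 6 v"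
    using assms(2) by auto
next
  assume "vtype r s \<Delta> F C ori 3 v \<or> vtype r s \<Delta> F C ori 4 v \<or> vtype r s \<Delta> F C ori 6 v"
  then have "even_in_flags \<Delta> F C ori v \<noteq> {} \<or> even_out_flags \<Delta> F C ori v \<noteq> {}"
    using vtype_3_even_flags(1) vtype_4_even_flags(2) vtype_6_even_flags(2) by fastforce
  then show "\<exists>f\<in>nc_flags C \<Delta> v. feven C \<Delta> f"
    unfolding even_in_flags_def even_out_flags_def by auto
qed

lemma even_in_out_flags_vtype:
  assumes "k \<in> {1..6}" "vtype r s \<Delta> F C ori k v"
  shows "int (card (even_in_flags \<Delta> F C ori v)) - int (card (even_out_flags \<Delta> F C ori v))
           = of_bool (vtype r s \<Delta> F C ori 3 v) + of_bool (vtype r s \<Delta> F C ori 4 v)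
             - of_bool (vtype r s \<Delta> F C ori 6 v)"
proof -
  consider "vtype r s \<Delta> F C ori 3 v" | "vtype r s \<Delta> F C ori 4 v" | "vtype r s \<Delta> F C ori 6 v"
    | "\<not> (vtype r s \<Delta> F C ori 3 v \<or> vtype r s \<Delta> F C ori 4 v \<or> vtype r s \<Delta> F C ori 6 v)"
    by blast
  then show ?thesis
  proof cases
    case 1
    moreover have "\<not> vtype r s \<Delta> F C ori 6 v" using 1 vtype_6_not_3_4 by metis
    ultimately show ?thesis using vtype_3_even_flags[OF 1] vtype_3_not_4[OF 1] by simp
  next
    case 2
    moreover have "\<not> vtype r s \<Delta> F C ori 3 v" "\<not> vtype r s \<Delta> F C ori 6 v"
      using 2 vtype_3_not_4 vtype_6_not_3_4 by metis+
    ultimately show ?thesis using vtype_4_even_flags[OF 2] by simp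
  next
    case 3
    then show ?thesis using vtype_6_even_flags[OF 3] vtype_6_not_3_4[OF 3] by simp
  next
    case 4
    then have "even_in_flags \<Delta> F C ori v = {}" "even_out_flags \<Delta> F C ori v = {}"
      using ex_even_flag_iff_vtype[OF assms] unfolding even_in_flags_def even_out_flags_def by auto
    then show ?thesis using 4 by simp
  qed
qed

lemma old_broccoliD:
  assumes "old_broccoli r s \<Delta> F C ori"
  shows "is_curve r s \<Delta> C" "\<And>v. v \<in> verts C \<Longrightarrow> \<exists>k\<in>{1..6}. vtype r s \<Delta> F C ori k v"
  using assms unfolding old_broccoli_def in_Mor_def by auto

lemma n_type_even_charge_balance:
  assumes "old_broccoli r s \<Delta> F C ori"
  shows "int (n_type r s \<Delta> F C ori 3) + int (n_type r s \<Delta> F C ori 4) - int (n_type r s \<Delta> F C ori 6)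
           = int (e_fixed \<Delta> F) - int (e_nonfixed \<Delta> F)"
proof -
  let ?t = "\<lambda>k v. vtype r s \<Delta> F C ori k v"
  have C: "is_curve r s \<Delta> C" using old_broccoliD[OF assms] by blast
  then have "finite (verts C)" unfolding is_curve_def by blast
  then have "int (n_type r s \<Delta> F C ori k) = (\<Sum>v\<in>verts C. of_bool (?t k v))" for k
    unfolding n_type_def by (simp add: Int_def)
  then have "int (n_type r s \<Delta> F C ori 3) + int (n_type r s \<Delta> F C ori 4) - int (n_type r s \<Delta> F C ori 6)
      = (\<Sum>v\<in>verts C. of_bool (?t 3 v) + of_bool (?t 4 v) - of_bool (?t 6 v))"
    by (simp add: sum.distrib sum_subtractf)
  also have "\<dots> = (\<Sum>v\<in>verts C. \<Sum>f\<in>flags_at C \<Delta> v. even_charge C \<Delta> F ori f)"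
  proof (rule sum.cong[OF refl])
    fix v assume "v \<in> verts C"
    then obtain k where "k \<in> {1..6}" "?t k v" using old_broccoliD(2)[OF assms] by blast
    then show "of_bool (?t 3 v) + of_bool (?t 4 v) - of_bool (?t 6 v)
        = (\<Sum>f\<in>flags_at C \<Delta> v. even_charge C \<Delta> F ori f)"
      using sum_even_charge_flags_at[OF finite_flags_at[OF C]] even_in_out_flags_vtype by metis
  qed
  also have "\<dots> = (\<Sum>f\<in>all_flags C \<Delta>. even_charge C \<Delta> F ori f)"
    by (rule sum_over_vertices_flags_at[OF C])
  also have "\<dots> = int (e_fixed \<Delta> F) - int (e_nonfixed \<Delta> F)"
    by (rule sum_even_charge_all_flags[OF C])
  finally show ?thesis .
qed

lemma V_cm_eq_vtype_6:
  assumes "old_broccoli r s \<Delta> F C ori"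
  shows "V_cm r s \<Delta> C = {v \<in> verts C. vtype r s \<Delta> F C ori 6 v}"
proof -
  have "v \<in> V_cm r s \<Delta> C \<longleftrightarrow> vtype r s \<Delta> F C ori 6 v" if v: "v \<in> verts C" for v
  proof -
    obtain k where k: "k \<in> {1..6}" "vtype r s \<Delta> F C ori k v" using old_broccoliD(2)[OF assms v] by blast
    have "v \<in> V_cm r s \<Delta> C \<longleftrightarrow> has_complex_mark r s C v \<and> card (nc_flags C \<Delta> v) = 3 \<and>
        (vtype r s \<Delta> F C ori 3 v \<or> vtype r s \<Delta> F C ori 4 v \<or> vtype r s \<Delta> F C ori 6 v)"
      unfolding V_cm_def using v even_mikh_mult_iff[OF old_broccoliD(1)[OF assms] v]
        ex_even_flag_iff_vtype[OF k] by auto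
    also have "\<dots> \<longleftrightarrow> vtype r s \<Delta> F C ori 6 v"
      using vtype_6_marked vtype_3_4_unmarked unmarked3_no_complex_mark by metis
    finally show ?thesis .
  qed
  then show ?thesis unfolding V_cm_def by blast
qed

lemma V_wcm_eq_vtype_3_4:
  assumes "old_broccoli r s \<Delta> F C ori"
  shows "V_wcm r s \<Delta> C = {v \<in> verts C. vtype r s \<Delta> F C ori 3 v} \<union> {v \<in> verts C. vtype r s \<Delta> F C ori 4 v}"
proof -
  have "v \<in> V_wcm r s \<Delta> C \<longleftrightarrow> vtype r s \<Delta> F C ori 3 v \<or> vtype r s \<Delta> F C ori 4 v"
    if v: "v \<in> verts C" for v
  proof -
    obtain k where k: "k \<in> {1..6}" "vtype r s \<Delta> F C ori k v" using old_broccoliD(2)[OF assms v] by blast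
    have "v \<in> V_wcm r s \<Delta> C \<longleftrightarrow> unmarked3 r s \<Delta> C v \<and>
        (vtype r s \<Delta> F C ori 3 v \<or> vtype r s \<Delta> F C ori 4 v \<or> vtype r s \<Delta> F C ori 6 v)"
      unfolding V_wcm_def using v even_mikh_mult_iff[OF old_broccoliD(1)[OF assms] v]
        ex_even_flag_iff_vtype[OF k] by (auto simp: unmarked3_def)
    also have "\<dots> \<longleftrightarrow> vtype r s \<Delta> F C ori 3 v \<or> vtype r s \<Delta> F C ori 4 v"
      using vtype_6_marked vtype_3_4_unmarked unmarked3_no_complex_mark by metis
    finally show ?thesis .
  qed
  then show ?thesis unfolding V_wcm_def by blast
qed

theorem lemma3p6:
  fixes C :: "('v, 'e) curve" and ori :: "'e \<Rightarrow> bool"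
  assumes "old_broccoli r s \<Delta> F C ori"
  shows "n_type r s \<Delta> F C ori 3 + n_type r s \<Delta> F C ori 4 + e_nonfixed \<Delta> F
           = n_type r s \<Delta> F C ori 6 + e_fixed \<Delta> F
         \<and> broccoli_index r s \<Delta> F C = 0"
proof -
  have "finite (verts C)" using old_broccoliD(1)[OF assms] unfolding is_curve_def by blast
  then have "card (V_wcm r s \<Delta> C) = n_type r s \<Delta> F C ori 3 + n_type r s \<Delta> F C ori 4"
    unfolding V_wcm_eq_vtype_3_4[OF assms] n_type_def
    by (simp add: card_Un_disjoint disjoint_iff vtype_3_not_4)
  moreover have "card (V_cm r s \<Delta> C) = n_type r s \<Delta> F C ori 6"
    unfolding V_cm_eq_vtype_6[OF assms] n_type_def ..
  ultimately show ?thesis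
    using n_type_even_charge_balance[OF assms] unfolding broccoli_index_def by linarith
qed

end
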